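(* Let $n>k\ge 1$ be integers, not both even, let $\alpha=\lceil n/2\rceil-\lfloor (n-k)/2\rfloor$, $\beta=k-\alpha$, and $G=\sqrt{n/k}\,W_n^H\Sigma W_k$. Among all $k\times k$ submatrices $G_k$ of $G$ formed by $k$ distinct rows, $\det(G_kG_k^H)$ is minimized when the selected row indices are circularly successive, i.e. of the form $\{i,i+1,\dots,i+k-1\}$ with indices taken modulo $n$ in $\{1,\dots,n\}$; in that case $\det(G_kG_k^H)=\frac{2^{k(k-1)}}{k^k}\prod_{r=1}^{k-1}\left(\sin^2\frac{\pi r}{n}\right)^{k-r}$.
   Context: For a positive integer $l$, $W_l$ denotes the unitary $l\times l$ DFT matrix, $(W_l)_{r,s}=\frac{1}{\sqrt l}e^{-j2\pi(r-1)(s-1)/l}$, and $^H$ denotes conjugate transpose. $\Sigma$ is the $n\times k$ matrix $\begin{pmatrix} I_\alpha & 0\\ 0 & 0\\ 0 & I_\beta\end{pmatrix}$: its first $\alpha$ rows are $(I_\alpha\ 0)$, its last $\beta$ rows are $(0\ I_\beta)$, and its middle $n-k$ rows are zero. *)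

theory Defs
  imports Complex_Main "Jordan_Normal_Form.Determinant"
begin

text \<open>Matrices are 0-indexed JNF matrices; the paper's index r (1-based) is r+1 here.\<close>

definition mat_H :: "complex mat \<Rightarrow> complex mat" where
  "mat_H A = mat (dim_col A) (dim_row A) (\<lambda>(i,j). cnj (A $$ (j,i)))"

definition DFT :: "nat \<Rightarrow> complex mat" where
  "DFT l = mat l l (\<lambda>(r,s). complex_of_real (1 / sqrt (real l)) *
      exp (- \<i> * complex_of_real (2 * pi * real r * real s / real l)))"

definition alpha :: "nat \<Rightarrow> nat \<Rightarrow> nat" where
  "alpha n k = nat (\<lceil>real n / 2\<rceil> - \<lfloor>real (n - k) / 2\<rfloor>)"

definition beta :: "nat \<Rightarrow> nat \<Rightarrow> nat" where
  "beta n k = k - alpha n k"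

text \<open>The n x k selection matrix Sigma: first alpha rows (I_alpha 0),
  middle n-k rows zero, last beta rows (0 I_beta).\<close>
definition Sigma_mat :: "nat \<Rightarrow> nat \<Rightarrow> complex mat" where
  "Sigma_mat n k = mat n k (\<lambda>(r,s).
      if (r < alpha n k \<and> s = r) \<or> (n - beta n k \<le> r \<and> s + n = r + k) then 1 else 0)"

definition G_mat :: "nat \<Rightarrow> nat \<Rightarrow> complex mat" where
  "G_mat n k = complex_of_real (sqrt (real n / real k)) \<cdot>\<^sub>m
      (mat_H (DFT n) * Sigma_mat n k * DFT k)"

definition row_submat :: "complex mat \<Rightarrow> nat list \<Rightarrow> complex mat" where
  "row_submat A rs = mat (length rs) (dim_col A) (\<lambda>(i,j). A $$ (rs ! i, j))"

definition circ_succ :: "nat \<Rightarrow> nat \<Rightarrow> nat \<Rightarrow> nat set" where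
  "circ_succ n k i = (\<lambda>t. (i + t) mod n) ` {..<k}"

end

theory Submission
  imports Defs "HOL-Analysis.Complex_Transcendental" "HOL-Analysis.Convex"
begin

text \<open>
  Write \<open>\<omega>(x) = exp (2 \<pi> i x / n)\<close>. Column \<open>c\<close> of \<open>W_n^H \<Sigma>\<close> is column \<open>\<rho>(c)\<close> of \<open>W_n^H\<close>, with entries
  \<open>n^(-1/2) \<omega>(x)^\<rho>(c)\<close>, and modulo \<open>n\<close> the frequencies \<open>\<rho>(c)\<close> are the consecutive integers
  \<open>-\<beta>, \<dots>, \<alpha> - 1\<close>. So the rows \<open>x_1, \<dots>, x_k\<close> of \<open>W_n^H \<Sigma>\<close> form, up to a column permutation and
  unimodular row factors, \<open>n^(-1/2)\<close> times the Vandermonde matrix of the \<open>\<omega>(x_i)\<close>; as \<open>W_k\<close> is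
  unitary, \<open>det (G_k G_k^H) = k^(-k) \<Prod>_(i<j) |\<omega>(x_j) - \<omega>(x_i)|^2 = 2^(k(k-1)) k^(-k) \<Prod>_(i<j) sin^2 (\<pi> (x_j - x_i) / n)\<close>.

  Taking logarithms, one minimises the sum of \<open>\<phi>(x_j - x_i)\<close> over ordered pairs, where
  \<open>\<phi>(t) = ln sin^2 (\<pi> t / n)\<close> is even, \<open>n\<close>-periodic and concave on \<open>(0, n)\<close>. Sort the points; for each
  \<open>0 < m < k\<close> the \<open>k\<close> cyclic gaps between a point and its \<open>m\<close>-th successor lie in \<open>[m, n - k + m]\<close>
  and sum to \<open>m n\<close>, so by concavity they contribute at least \<open>(k - m) \<phi>(m) + m \<phi>(k - m)\<close>. Summed
  over \<open>m\<close>, this is exactly the value attained by \<open>k\<close> circularly consecutive indices.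
\<close>

section \<open>Conjugate transposes and Vandermonde determinants\<close>

interpretation cnj_hom: comm_ring_hom cnj
  by unfold_locales auto

lemma mat_H_carrier: "A \<in> carrier_mat a b \<Longrightarrow> mat_H A \<in> carrier_mat b a"
  unfolding mat_H_def by auto

lemma det_mat_H:
  assumes "A \<in> carrier_mat m m"
  shows "det (mat_H A) = cnj (det A)"
proof -
  have "mat_H A = transpose_mat (map_mat cnj A)"
    using assms by (intro eq_matI) (auto simp: mat_H_def)
  then show ?thesis
    using assms by (simp add: det_transpose)
qed

lemma det_mult_mat_H:
  assumes "A \<in> carrier_mat m m"
  shows "det (A * mat_H A) = complex_of_real ((cmod (det A))\<^sup>2)"
proof -
  have "det (A * mat_H A) = det A * cnj (det A)"
    using assms mat_H_carrier[OF assms] by (simp add: det_mult det_mat_H)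
  then show ?thesis
    by (metis complex_norm_square)
qed

lemma det_permute_cols:
  assumes A: "A \<in> carrier_mat m m" and p: "p permutes {0..<m}"
  shows "det (Matrix.mat m m (\<lambda>(i, j). A $$ (i, p j))) = of_int (sign p) * det A"
proof -
  have "transpose_mat (Matrix.mat m m (\<lambda>(i, j). A $$ (i, p j)))
      = Matrix.mat m m (\<lambda>(i, j). transpose_mat A $$ (p i, j))"
    using A permutes_in_image[OF p] by (intro eq_matI) auto
  then show ?thesis
    using A p det_transpose[of "Matrix.mat m m (\<lambda>(i, j). A $$ (i, p j))" m]
    by (simp add: det_permute_rows det_transpose)
qed

definition vandermonde :: "nat \<Rightarrow> (nat \<Rightarrow> 'a :: comm_ring_1) \<Rightarrow> 'a mat" where
  "vandermonde m z = Matrix.mat m m (\<lambda>(i, j). z i ^ j)"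

lemma dim_vandermonde [simp]:
  "dim_row (vandermonde m z) = m" "dim_col (vandermonde m z) = m"
  by (simp_all add: vandermonde_def)

text \<open>Subtracting \<open>z 0\<close> times each column from the next one clears the first row of the
  Vandermonde matrix.\<close>
definition col_elim_mat :: "nat \<Rightarrow> 'a :: comm_ring_1 \<Rightarrow> 'a mat" where
  "col_elim_mat m c = Matrix.mat m m (\<lambda>(r, j). (if r = j then 1 else 0) - (if Suc r = j then c else 0))"

lemma dim_col_elim_mat [simp]:
  "dim_row (col_elim_mat m c) = m" "dim_col (col_elim_mat m c) = m"
  by (simp_all add: col_elim_mat_def)

lemma det_col_elim_mat: "det (col_elim_mat m c) = 1"
proof -
  have "upper_triangular (col_elim_mat m c)"
    unfolding upper_triangular_def col_elim_mat_def by auto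
  moreover have "diag_mat (col_elim_mat m c) = replicate m 1"
    unfolding diag_mat_def by (intro nth_equalityI) (auto simp: col_elim_mat_def)
  ultimately show ?thesis
    by (simp add: det_upper_triangular[of _ m] col_elim_mat_def)
qed

lemma vandermonde_mult_col_elim_mat:
  assumes "i < m" "j < m"
  shows "(vandermonde m z * col_elim_mat m (z 0)) $$ (i, j)
    = (if j = 0 then 1 else (z i - z 0) * z i ^ (j - 1))"
proof -
  have "(vandermonde m z * col_elim_mat m (z 0)) $$ (i, j)
      = (\<Sum>r<m. if r = j then z i ^ r else 0) - (\<Sum>r<m. if Suc r = j then z 0 * z i ^ r else 0)"
    using assms unfolding sum_subtractf[symmetric]
    by (auto simp: vandermonde_def col_elim_mat_def scalar_prod_def atLeast0LessThan
        right_diff_distrib intro!: sum.cong)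
  also have "\<dots> = (if j = 0 then 1 else (z i - z 0) * z i ^ (j - 1))"
    using assms by (cases j) (auto simp: algebra_simps)
  finally show ?thesis .
qed

lemma mat_delete_vandermonde_mult_col_elim_mat:
  "mat_delete (vandermonde (Suc m) z * col_elim_mat (Suc m) (z 0)) 0 0
    = mat\<^sub>r m m (\<lambda>i. (z (Suc i) - z 0) \<cdot>\<^sub>v Matrix.vec m (\<lambda>j. z (Suc i) ^ j))"
proof (rule eq_matI)
  fix i j
  assume "i < dim_row (mat\<^sub>r m m (\<lambda>i. (z (Suc i) - z 0) \<cdot>\<^sub>v Matrix.vec m (\<lambda>j. z (Suc i) ^ j)))"
    and "j < dim_col (mat\<^sub>r m m (\<lambda>i. (z (Suc i) - z 0) \<cdot>\<^sub>v Matrix.vec m (\<lambda>j. z (Suc i) ^ j)))"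
  then show "mat_delete (vandermonde (Suc m) z * col_elim_mat (Suc m) (z 0)) 0 0 $$ (i, j)
      = mat\<^sub>r m m (\<lambda>i. (z (Suc i) - z 0) \<cdot>\<^sub>v Matrix.vec m (\<lambda>j. z (Suc i) ^ j)) $$ (i, j)"
    using vandermonde_mult_col_elim_mat[of "Suc i" "Suc m" "Suc j" z] by (simp add: mat_delete_def)
qed (simp_all add: mat_delete_def)

lemma det_vandermonde: "det (vandermonde m z) = (\<Prod>j<m. \<Prod>i<j. z j - z i)"
proof (induction m arbitrary: z)
  case 0
  then show ?case by (simp add: vandermonde_def)
next
  case (Suc m)
  define M where "M = vandermonde (Suc m) z * col_elim_mat (Suc m) (z 0)"
  have carrier: "M \<in> carrier_mat (Suc m) (Suc m)"
    by (simp add: M_def carrier_matI)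
  have "det M = det (vandermonde (Suc m) z)"
    using det_mult[of "vandermonde (Suc m) z" "Suc m" "col_elim_mat (Suc m) (z 0)"]
    by (simp add: M_def det_col_elim_mat carrier_matI)
  also have "det M = (\<Sum>j<Suc m. M $$ (0, j) * cofactor M 0 j)"
    using laplace_expansion_row[OF carrier] by simp
  also have "\<dots> = det (mat_delete M 0 0)"
  proof -
    have "M $$ (0, j) = (if j = 0 then 1 else 0)" if "j < Suc m" for j
      using vandermonde_mult_col_elim_mat[OF _ that, of 0 z] by (simp add: M_def)
    then show ?thesis
      by (simp add: cofactor_def sum.lessThan_Suc_shift del: sum.lessThan_Suc)
  qed
  also have "mat_delete M 0 0 = mat\<^sub>r m m (\<lambda>i. (z (Suc i) - z 0) \<cdot>\<^sub>v Matrix.vec m (\<lambda>j. z (Suc i) ^ j))"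
    unfolding M_def by (rule mat_delete_vandermonde_mult_col_elim_mat)
  also have "det \<dots> = (\<Prod>i<m. z (Suc i) - z 0) * det (vandermonde m (\<lambda>i. z (Suc i)))"
  proof -
    have "mat\<^sub>r m m (\<lambda>i. Matrix.vec m (\<lambda>j. z (Suc i) ^ j)) = vandermonde m (\<lambda>i. z (Suc i))"
      by (intro eq_matI) (auto simp: vandermonde_def)
    then show ?thesis
      using det_rows_mul[of "\<lambda>i. Matrix.vec m (\<lambda>j. z (Suc i) ^ j)" m "\<lambda>i. z (Suc i) - z 0"]
      by (simp add: atLeast0LessThan)
  qed
  also have "\<dots> = (\<Prod>j<Suc m. \<Prod>i<j. z j - z i)"
    by (simp add: Suc.IH prod.lessThan_Suc_shift prod.distrib del: prod.lessThan_Suc)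
  finally show ?case ..
qed

lemma det_scaled_vandermonde_perm:
  fixes u z :: "nat \<Rightarrow> 'a :: comm_ring_1"
  assumes p: "p permutes {0..<m}"
  shows "det (Matrix.mat m m (\<lambda>(i, j). u i * z i ^ p j))
    = of_int (sign p) * (\<Prod>i<m. u i) * det (vandermonde m z)"
proof -
  define A where "A = mat\<^sub>r m m (\<lambda>i. u i \<cdot>\<^sub>v Matrix.vec m (\<lambda>j. z i ^ j))"
  have "Matrix.mat m m (\<lambda>(i, j). u i * z i ^ p j) = Matrix.mat m m (\<lambda>(i, j). A $$ (i, p j))"
    using permutes_in_image[OF p] by (intro eq_matI) (auto simp: A_def)
  moreover have "det A = (\<Prod>i<m. u i) * det (vandermonde m z)"
  proof -
    have "mat\<^sub>r m m (\<lambda>i. Matrix.vec m (\<lambda>j. z i ^ j)) = vandermonde m z"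
      by (intro eq_matI) (auto simp: vandermonde_def)
    then show ?thesis
      using det_rows_mul[of "\<lambda>i. Matrix.vec m (\<lambda>j. z i ^ j)" m u] by (simp add: A_def atLeast0LessThan)
  qed
  ultimately show ?thesis
    using det_permute_cols[OF _ p, of A] by (simp add: A_def)
qed

section \<open>The unitary DFT matrix\<close>

lemma DFT_carrier: "DFT l \<in> carrier_mat l l"
  by (simp add: DFT_def)

lemma dim_DFT [simp]: "dim_row (DFT l) = l" "dim_col (DFT l) = l"
  by (simp_all add: DFT_def)

lemma DFT_entry:
  "r < l \<Longrightarrow> s < l \<Longrightarrow>
    DFT l $$ (r, s) = complex_of_real (1 / sqrt (real l)) * cis (- (2 * pi * real r * real s / real l))"
  by (simp add: DFT_def cis_conv_exp)

lemma mat_H_DFT_entry: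
  "r < l \<Longrightarrow> s < l \<Longrightarrow>
    mat_H (DFT l) $$ (s, r) = complex_of_real (1 / sqrt (real l)) * cis (2 * pi * real r * real s / real l)"
  by (simp add: mat_H_def DFT_entry cis_cnj)

lemma sum_powers_root_of_unity:
  fixes a :: int
  assumes l: "l > 0" and a: "\<bar>a\<bar> < int l"
  shows "(\<Sum>s<l. cis (2 * pi * of_int a / real l) ^ s) = (if a = 0 then of_nat l else 0)"
proof (cases "a = 0")
  case False
  define w where "w = cis (2 * pi * of_int a / real l)"
  have angle: "real l * (2 * pi * of_int a / real l) = 2 * pi * of_int a"
    using l by simp
  have "w ^ l = 1"
    unfolding w_def Complex.DeMoivre angle by (rule cis_multiple_2pi) simp
  moreover have "w \<noteq> 1"
  proof
    assume "w = 1"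
    then have "cos (2 * pi * of_int a / real l) = 1"
      by (simp add: w_def complex_eq_iff)
    then obtain m :: int where "2 * pi * of_int a / real l = of_int m * 2 * pi"
      using cos_one_2pi_int by blast
    then have "a = m * int l"
      using l by (simp add: field_simps) (metis of_int_eq_iff of_int_mult of_int_of_nat_eq)
    then show False
      using a False by (cases "m = 0") (auto simp: abs_mult)
  qed
  ultimately show ?thesis
    using False by (simp add: sum_gp_strict w_def[symmetric])
qed simp

lemma DFT_entry_mult_mat_H_DFT_entry:
  assumes l: "l > 0" and "r < l" "r' < l" "s < l"
  shows "DFT l $$ (r, s) * mat_H (DFT l) $$ (s, r')
    = complex_of_real (1 / real l) * cis (2 * pi * of_int (int r' - int r) / real l) ^ s"
proof -
  have angle: "- (2 * pi * real r * real s / real l) + 2 * pi * real r' * real s / real l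
      = real s * (2 * pi * of_int (int r' - int r) / real l)"
    using l by (simp add: field_simps)
  have scale: "complex_of_real (1 / sqrt (real l)) * complex_of_real (1 / sqrt (real l))
      = complex_of_real (1 / real l)"
    using l by (simp flip: of_real_mult)
  have "DFT l $$ (r, s) * mat_H (DFT l) $$ (s, r')
      = (complex_of_real (1 / sqrt (real l)) * complex_of_real (1 / sqrt (real l)))
        * (cis (- (2 * pi * real r * real s / real l)) * cis (2 * pi * real r' * real s / real l))"
    unfolding DFT_entry[OF assms(2,4)] mat_H_DFT_entry[OF assms(3,4)] by (simp only: mult_ac)
  also have "\<dots> = complex_of_real (1 / real l) * cis (real s * (2 * pi * of_int (int r' - int r) / real l))"
    unfolding cis_mult scale angle ..
  also have "\<dots> = complex_of_real (1 / real l) * cis (2 * pi * of_int (int r' - int r) / real l) ^ s"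
    by (simp only: Complex.DeMoivre)
  finally show ?thesis .
qed

lemma DFT_unitary:
  assumes l: "l > 0"
  shows "DFT l * mat_H (DFT l) = 1\<^sub>m l"
proof (rule eq_matI)
  fix r r'
  assume "r < dim_row (1\<^sub>m l)" "r' < dim_col (1\<^sub>m l)"
  then have r: "r < l" "r' < l" by auto
  have "(DFT l * mat_H (DFT l)) $$ (r, r') = (\<Sum>s<l. DFT l $$ (r, s) * mat_H (DFT l) $$ (s, r'))"
    using r DFT_carrier[of l] mat_H_carrier[OF DFT_carrier[of l]]
    by (simp add: scalar_prod_def atLeast0LessThan)
  also have "\<dots> = complex_of_real (1 / real l) * (\<Sum>s<l. cis (2 * pi * of_int (int r' - int r) / real l) ^ s)"
    using r by (simp add: DFT_entry_mult_mat_H_DFT_entry[OF l] sum_distrib_left)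
  also have "\<dots> = 1\<^sub>m l $$ (r, r')"
    using sum_powers_root_of_unity[OF l, of "int r' - int r"] r l by auto
  finally show "(DFT l * mat_H (DFT l)) $$ (r, r') = 1\<^sub>m l $$ (r, r')" .
qed (auto simp: DFT_def mat_H_def)

lemma cmod_det_DFT:
  assumes "l > 0"
  shows "cmod (det (DFT l)) = 1"
proof -
  have "complex_of_real ((cmod (det (DFT l)))\<^sup>2) = 1"
    using det_mult_mat_H[OF DFT_carrier[of l]] DFT_unitary[OF assms] by simp
  then have "(cmod (det (DFT l)))\<^sup>2 = 1"
    by (metis of_real_eq_1_iff)
  then show ?thesis
    using norm_ge_zero[of "det (DFT l)"] by (auto simp: power2_eq_1_iff)
qed

section \<open>The determinant of \<open>G\<^sub>k G\<^sub>k\<^sup>H\<close>\<close>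

lemma row_submat_carrier: "row_submat A rs \<in> carrier_mat (length rs) (dim_col A)"
  by (simp add: row_submat_def)

lemma row_submat_mult:
  assumes "set rs \<subseteq> {..<dim_row A}"
  shows "row_submat (A * B) rs = row_submat A rs * B"
proof (rule eq_matI)
  fix i j
  assume "i < dim_row (row_submat A rs * B)" "j < dim_col (row_submat A rs * B)"
  moreover from this have "rs ! i < dim_row A"
    using assms nth_mem by (fastforce simp: row_submat_def)
  ultimately show "row_submat (A * B) rs $$ (i, j) = (row_submat A rs * B) $$ (i, j)"
    by (simp add: row_submat_def Matrix.row_def) (auto intro!: arg_cong2[where f = scalar_prod])
qed (simp_all add: row_submat_def)

lemma row_submat_smult:
  assumes "set rs \<subseteq> {..<dim_row A}"
  shows "row_submat (c \<cdot>\<^sub>m A) rs = c \<cdot>\<^sub>m row_submat A rs"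
  using assms nth_mem by (intro eq_matI) (fastforce simp: row_submat_def)+

lemma alpha_le:
  assumes "1 \<le> k" "k \<le> n"
  shows "alpha n k \<le> k"
proof -
  have "\<lfloor>real (n - k) / 2\<rfloor> = int ((n - k) div 2)"
    using floor_divide_of_nat_eq[of "n - k" 2] by simp
  moreover have "\<lceil>real n / 2\<rceil> \<le> int ((n + 1) div 2)"
    by (intro ceiling_le) linarith
  moreover have "(n + 1) div 2 \<le> k + (n - k) div 2"
    using assms by presburger
  ultimately show ?thesis
    unfolding alpha_def by linarith
qed

definition Sigma_row :: "nat \<Rightarrow> nat \<Rightarrow> nat \<Rightarrow> nat" where
  "Sigma_row n k c = (if c < alpha n k then c else c + n - k)"

lemma dim_Sigma_mat [simp]: "dim_row (Sigma_mat n k) = n" "dim_col (Sigma_mat n k) = k"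
  by (simp_all add: Sigma_mat_def)

lemma Sigma_row_less: "c < k \<Longrightarrow> k \<le> n \<Longrightarrow> Sigma_row n k c < n"
  by (auto simp: Sigma_row_def)

lemma Sigma_mat_entry:
  assumes "1 \<le> k" "k \<le> n" "r < n" "c < k"
  shows "Sigma_mat n k $$ (r, c) = (if r = Sigma_row n k c then 1 else 0)"
  using assms alpha_le[OF assms(1,2)] unfolding Sigma_mat_def Sigma_row_def beta_def by auto

lemma mat_H_DFT_mult_Sigma_entry:
  assumes "1 \<le> k" "k \<le> n" "x < n" "c < k"
  shows "(mat_H (DFT n) * Sigma_mat n k) $$ (x, c) = mat_H (DFT n) $$ (x, Sigma_row n k c)"
proof -
  have "(mat_H (DFT n) * Sigma_mat n k) $$ (x, c)
      = (\<Sum>r<n. mat_H (DFT n) $$ (x, r) * Sigma_mat n k $$ (r, c))"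
    using assms by (simp add: mat_H_def scalar_prod_def atLeast0LessThan)
  also have "\<dots> = (\<Sum>r<n. if r = Sigma_row n k c then mat_H (DFT n) $$ (x, r) else 0)"
    using assms by (intro sum.cong) (auto simp: Sigma_mat_entry)
  finally show ?thesis
    using Sigma_row_less[OF assms(4,2)] by simp
qed

text \<open>\<open>Sigma_rank n k c\<close> is the position of \<open>Sigma_row n k c\<close> among the residues
  \<open>-\<beta>, \<dots>, \<alpha> - 1\<close> modulo \<open>n\<close>.\<close>
definition Sigma_rank :: "nat \<Rightarrow> nat \<Rightarrow> nat \<Rightarrow> nat" where
  "Sigma_rank n k c = (if c < alpha n k then c + beta n k else if c < k then c - alpha n k else c)"

lemma Sigma_rank_permutes:
  assumes "1 \<le> k" "k \<le> n"
  shows "Sigma_rank n k permutes {0..<k}"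
proof (rule bij_imp_permutes)
  have "alpha n k + beta n k = k"
    using alpha_le[OF assms] by (simp add: beta_def)
  then show "bij_betw (Sigma_rank n k) {0..<k} {0..<k}"
    by (intro bij_betw_byWitness[where f' = "\<lambda>c. if c < beta n k then c + alpha n k else c - beta n k"])
      (auto simp: Sigma_rank_def)
qed (use alpha_le[OF assms] in \<open>simp add: Sigma_rank_def\<close>)

lemma Sigma_row_eq_rank:
  assumes "1 \<le> k" "k \<le> n" "c < k"
  shows "real (Sigma_row n k c)
    = real (Sigma_rank n k c) - real (beta n k) + (if c < alpha n k then 0 else real n)"
  using assms alpha_le[OF assms(1,2)] by (auto simp: Sigma_row_def Sigma_rank_def beta_def)

lemma row_submat_DFT_Sigma_entry:
  assumes "1 \<le> k" "k \<le> n" "set rs \<subseteq> {..<n}" "i < length rs" "c < k"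
  shows "row_submat (mat_H (DFT n) * Sigma_mat n k) rs $$ (i, c)
    = (complex_of_real (1 / sqrt (real n)) * cis (- (2 * pi * real (beta n k) * real (rs ! i) / real n)))
      * cis (2 * pi * real (rs ! i) / real n) ^ Sigma_rank n k c"
proof -
  define x where "x = real (rs ! i)"
  have x: "rs ! i < n"
    using assms(3,4) nth_mem by blast
  have "2 * pi * real (Sigma_row n k c) * x / real n
      = - (2 * pi * real (beta n k) * x / real n) + real (Sigma_rank n k c) * (2 * pi * x / real n)
        + (if c < alpha n k then 0 else 2 * pi * x)"
    using x unfolding Sigma_row_eq_rank[OF assms(1,2,5)] by (auto simp: field_simps)
  then have "cis (2 * pi * real (Sigma_row n k c) * x / real n)
      = cis (- (2 * pi * real (beta n k) * x / real n)) * cis (real (Sigma_rank n k c) * (2 * pi * x / real n))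
        * cis (if c < alpha n k then 0 else 2 * pi * x)"
    by (simp only: cis_mult)
  moreover have "cis (2 * pi * x) = 1"
    unfolding x_def by (rule cis_multiple_2pi) simp
  ultimately have "cis (2 * pi * real (Sigma_row n k c) * x / real n)
      = cis (- (2 * pi * real (beta n k) * x / real n)) * cis (2 * pi * x / real n) ^ Sigma_rank n k c"
    by (simp add: Complex.DeMoivre)
  then show ?thesis
    using assms x Sigma_row_less[OF assms(5,2)]
    by (simp add: row_submat_def mat_H_DFT_mult_Sigma_entry mat_H_DFT_entry x_def mult_ac)
qed

lemma cmod_det_row_submat_DFT_Sigma:
  assumes "1 \<le> k" "k \<le> n" "length rs = k" "set rs \<subseteq> {..<n}"
  shows "cmod (det (row_submat (mat_H (DFT n) * Sigma_mat n k) rs))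
    = (1 / sqrt (real n)) ^ k
      * (\<Prod>j<k. \<Prod>i<j. cmod (cis (2 * pi * real (rs ! j) / real n) - cis (2 * pi * real (rs ! i) / real n)))"
proof -
  define u where "u i = complex_of_real (1 / sqrt (real n)) * cis (- (2 * pi * real (beta n k) * real (rs ! i) / real n))" for i
  define z where "z i = cis (2 * pi * real (rs ! i) / real n)" for i
  have "row_submat (mat_H (DFT n) * Sigma_mat n k) rs = Matrix.mat k k (\<lambda>(i, c). u i * z i ^ Sigma_rank n k c)"
  proof (rule eq_matI)
    fix i c
    assume "i < dim_row (Matrix.mat k k (\<lambda>(i, c). u i * z i ^ Sigma_rank n k c))"
      and "c < dim_col (Matrix.mat k k (\<lambda>(i, c). u i * z i ^ Sigma_rank n k c))"
    then show "row_submat (mat_H (DFT n) * Sigma_mat n k) rs $$ (i, c)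
        = Matrix.mat k k (\<lambda>(i, c). u i * z i ^ Sigma_rank n k c) $$ (i, c)"
      using assms row_submat_DFT_Sigma_entry[OF assms(1,2,4)] by (simp add: u_def z_def)
  qed (use assms in \<open>simp_all add: row_submat_def\<close>)
  then have "det (row_submat (mat_H (DFT n) * Sigma_mat n k) rs)
      = of_int (sign (Sigma_rank n k)) * (\<Prod>i<k. u i) * (\<Prod>j<k. \<Prod>i<j. z j - z i)"
    using det_scaled_vandermonde_perm[OF Sigma_rank_permutes[OF assms(1,2)], of u z]
    by (simp add: det_vandermonde)
  moreover have "cmod (of_int (sign (Sigma_rank n k))) = 1"
    by (simp add: sign_def)
  moreover have "cmod (u i) = 1 / sqrt (real n)" for i
    by (simp add: u_def norm_mult norm_divide)
  ultimately show ?thesis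
    by (simp add: norm_mult prod_norm[symmetric] z_def)
qed

lemma cmod_cis_diff_sq: "(cmod (cis a - cis b))\<^sup>2 = 4 * (sin ((a - b) / 2))\<^sup>2"
proof -
  have "(cmod (cis a - cis b))\<^sup>2 = (cos a - cos b)\<^sup>2 + (sin a - sin b)\<^sup>2"
    by (simp add: cmod_power2)
  also have "\<dots> = 2 - 2 * cos (a - b)"
    by (simp add: cos_diff power2_eq_square algebra_simps)
  also have "cos (a - b) = cos (2 * ((a - b) / 2))"
    by (rule arg_cong[where f = cos]) simp
  also have "\<dots> = 1 - 2 * (sin ((a - b) / 2))\<^sup>2"
    by (rule cos_double_sin)
  finally show ?thesis
    by simp
qed

lemma prod_pairs_mult_4:
  fixes f :: "nat \<Rightarrow> nat \<Rightarrow> 'a :: comm_semiring_1"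
  shows "(\<Prod>j<k. \<Prod>i<j. 4 * f j i) = 2 ^ (k * (k - 1)) * (\<Prod>j<k. \<Prod>i<j. f j i)"
proof (induction k)
  case (Suc k)
  have power: "(2 :: 'a) ^ (k * (k - 1)) * 4 ^ k = 2 ^ (Suc k * (Suc k - 1))"
  proof -
    have "(4 :: 'a) ^ k = 2 ^ (2 * k)"
      by (simp add: power_mult)
    moreover have "k * (k - 1) + 2 * k = Suc k * (Suc k - 1)"
      by (cases k) (simp_all add: algebra_simps)
    ultimately show ?thesis
      by (metis power_add)
  qed
  have "(\<Prod>j<Suc k. \<Prod>i<j. 4 * f j i) = (\<Prod>j<k. \<Prod>i<j. 4 * f j i) * (4 ^ k * (\<Prod>i<k. f k i))"
    by (simp add: prod.distrib mult_ac)
  also have "\<dots> = (2 ^ (k * (k - 1)) * 4 ^ k) * ((\<Prod>j<k. \<Prod>i<j. f j i) * (\<Prod>i<k. f k i))"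
    unfolding Suc.IH by (simp only: mult_ac)
  also have "\<dots> = 2 ^ (Suc k * (Suc k - 1)) * (\<Prod>j<Suc k. \<Prod>i<j. f j i)"
    unfolding power by simp
  finally show ?case .
qed simp

definition sin_sq_prod :: "nat \<Rightarrow> nat list \<Rightarrow> real" where
  "sin_sq_prod n xs = (\<Prod>j<length xs. \<Prod>i<j. (sin (pi * (real (xs ! j) - real (xs ! i)) / real n))\<^sup>2)"

lemma cmod_cis_diff_sq_sin:
  "(cmod (cis (2 * pi * x / real n) - cis (2 * pi * y / real n)))\<^sup>2 = 4 * (sin (pi * (x - y) / real n))\<^sup>2"
proof -
  have "(2 * pi * x / real n - 2 * pi * y / real n) / 2 = pi * (x - y) / real n"
    by (simp add: diff_divide_distrib right_diff_distrib)
  then show ?thesis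
    by (simp add: cmod_cis_diff_sq)
qed

lemma cmod_det_row_submat_G:
  assumes "1 \<le> k" "k < n" "length rs = k" "set rs \<subseteq> {..<n}"
  shows "cmod (det (row_submat (G_mat n k) rs)) = (1 / sqrt (real k)) ^ k
    * (\<Prod>j<k. \<Prod>i<j. cmod (cis (2 * pi * real (rs ! j) / real n) - cis (2 * pi * real (rs ! i) / real n)))"
proof -
  define S where "S = row_submat (mat_H (DFT n) * Sigma_mat n k) rs"
  have "S \<in> carrier_mat k k"
    using assms row_submat_carrier[of "mat_H (DFT n) * Sigma_mat n k" rs] by (simp add: S_def mat_H_def)
  moreover have "set rs \<subseteq> {..<dim_row (mat_H (DFT n) * Sigma_mat n k)}"
    using assms by (simp add: mat_H_def)
  then have "row_submat (G_mat n k) rs = complex_of_real (sqrt (real n / real k)) \<cdot>\<^sub>m (S * DFT k)"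
    by (simp add: G_mat_def S_def row_submat_smult row_submat_mult)
  ultimately have "cmod (det (row_submat (G_mat n k) rs)) = sqrt (real n / real k) ^ k * cmod (det S)"
    using DFT_carrier[of k] cmod_det_DFT[of k] assms by (simp add: det_mult norm_mult norm_power)
  then show ?thesis
    using assms by (simp add: S_def cmod_det_row_submat_DFT_Sigma real_sqrt_divide power_mult_distrib[symmetric])
qed

lemma det_row_submat_G_mult_mat_H:
  fixes n k :: nat and rs :: "nat list"
  defines "Gk \<equiv> row_submat (G_mat n k) rs"
  assumes "1 \<le> k" "k < n" "length rs = k" "set rs \<subseteq> {..<n}"
  shows "det (Gk * mat_H Gk) = complex_of_real (2 ^ (k * (k - 1)) / real k ^ k * sin_sq_prod n rs)"
proof -
  have "(cmod (det Gk))\<^sup>2 = ((1 / sqrt (real k)) ^ k)\<^sup>2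
      * (\<Prod>j<k. \<Prod>i<j. (cmod (cis (2 * pi * real (rs ! j) / real n) - cis (2 * pi * real (rs ! i) / real n)))\<^sup>2)"
    using assms by (simp add: cmod_det_row_submat_G power_mult_distrib prod_power_distrib)
  also have "((1 / sqrt (real k)) ^ k)\<^sup>2 = ((1 / sqrt (real k))\<^sup>2) ^ k"
    by (simp only: power_mult[symmetric] mult.commute)
  also have "\<dots> = 1 / real k ^ k"
    by (simp add: power_divide)
  also have "(\<Prod>j<k. \<Prod>i<j. (cmod (cis (2 * pi * real (rs ! j) / real n) - cis (2 * pi * real (rs ! i) / real n)))\<^sup>2)
      = 2 ^ (k * (k - 1)) * sin_sq_prod n rs"
    using assms by (simp add: cmod_cis_diff_sq_sin prod_pairs_mult_4 sin_sq_prod_def)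
  finally have "(cmod (det Gk))\<^sup>2 = 2 ^ (k * (k - 1)) / real k ^ k * sin_sq_prod n rs"
    by simp
  moreover have "Gk \<in> carrier_mat k k"
    using assms row_submat_carrier[of "G_mat n k" rs] by (simp add: Gk_def G_mat_def)
  ultimately show ?thesis
    by (simp add: det_mult_mat_H)
qed

section \<open>Concavity of \<open>ln sin\<^sup>2\<close>\<close>

definition log_sin_sq :: "nat \<Rightarrow> real \<Rightarrow> real" where
  "log_sin_sq n t = ln ((sin (pi * t / real n))\<^sup>2)"

lemma log_sin_sq_minus [simp]: "log_sin_sq n (- t) = log_sin_sq n t"
  by (simp add: log_sin_sq_def)

lemma log_sin_sq_add_multiple:
  assumes "n > 0"
  shows "log_sin_sq n (t + real n * of_int z) = log_sin_sq n t"
proof -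
  have "pi * (t + real n * of_int z) / real n = pi * t / real n + of_int z * pi"
    using assms by (simp add: field_simps)
  moreover have "sin (of_int z * pi) = 0"
    using sin_zero_iff_int2 by blast
  moreover from this have "(cos (of_int z * pi))\<^sup>2 = 1"
    using sin_squared_eq[of "of_int z * pi"] by simp
  ultimately show ?thesis
    by (simp add: log_sin_sq_def sin_add power_mult_distrib)
qed

lemma log_sin_sq_reflect:
  assumes "n > 0"
  shows "log_sin_sq n (real n - t) = log_sin_sq n t"
  using log_sin_sq_add_multiple[OF assms, of "- t" 1] by simp

lemma sin_pi_divide_nonzero:
  assumes "n > 0" "0 < \<bar>d\<bar>" "\<bar>d\<bar> < real n"
  shows "sin (pi * d / real n) \<noteq> 0"
proof
  assume "sin (pi * d / real n) = 0"
  then obtain i :: int where "pi * d / real n = of_int i * pi"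
    using sin_zero_iff_int2 by blast
  then have "d = of_int i * real n"
    using assms(1) by (simp add: field_simps)
  moreover have "i \<noteq> 0"
    using \<open>d = of_int i * real n\<close> assms(2) by auto
  then have "real n \<le> \<bar>of_int i\<bar> * real n"
    using assms(1) by simp
  ultimately show False
    using assms(3) by (simp add: abs_mult)
qed

lemma cot_antimono:
  assumes "0 < u" "u \<le> v" "v < pi"
  shows "cos v / sin v \<le> cos u / sin u"
proof -
  have "sin u > 0" "sin v > 0"
    using assms by (auto intro: sin_gt_zero)
  moreover have "0 \<le> sin (v - u)"
    using assms by (intro sin_ge_zero) auto
  ultimately show ?thesis
    by (simp add: sin_diff field_simps)
qed

text \<open>The derivative of \<open>log_sin_sq n\<close> is \<open>2 (\<pi>/n) cot (\<pi> t/n)\<close>, which decreases on \<open>(0, n)\<close>.\<close>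
lemma concave_on_log_sin_sq:
  assumes "n > 0"
  shows "concave_on {0<..<real n} (log_sin_sq n)"
  unfolding concave_on_def
proof (rule convex_on_realI)
  fix x
  assume "x \<in> {0<..<real n}"
  then have "sin (pi * x / real n) > 0"
    using assms by (intro sin_gt_zero) (auto simp: field_simps)
  then show "((\<lambda>t. - log_sin_sq n t) has_real_derivative
      - (2 * (pi / real n) * (cos (pi * x / real n) / sin (pi * x / real n)))) (at x)"
    unfolding log_sin_sq_def
    by (auto intro!: derivative_eq_intros simp: field_simps power2_eq_square)
next
  fix x y
  assume "x \<in> {0<..<real n}" "y \<in> {0<..<real n}" "x \<le> y"
  then have "cos (pi * y / real n) / sin (pi * y / real n) \<le> cos (pi * x / real n) / sin (pi * x / real n)"
    using assms by (intro cot_antimono) (auto simp: field_simps)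
  then have "2 * (pi / real n) * (cos (pi * y / real n) / sin (pi * y / real n))
      \<le> 2 * (pi / real n) * (cos (pi * x / real n) / sin (pi * x / real n))"
    by (rule mult_left_mono) simp
  then show "- (2 * (pi / real n) * (cos (pi * x / real n) / sin (pi * x / real n)))
      \<le> - (2 * (pi / real n) * (cos (pi * y / real n) / sin (pi * y / real n)))"
    by linarith
qed simp

lemma concave_on_sum_ge_chord:
  fixes f :: "real \<Rightarrow> real" and d :: "'i \<Rightarrow> real"
  assumes f: "concave_on {a..b} f" and "a < b" "finite I" and d: "\<And>i. i \<in> I \<Longrightarrow> d i \<in> {a..b}"
  shows "((real (card I) * b - sum d I) * f a + (sum d I - real (card I) * a) * f b) / (b - a)
    \<le> (\<Sum>i\<in>I. f (d i))"
proof -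
  have "((b - d i) * f a + (d i - a) * f b) / (b - a) \<le> f (d i)" if "i \<in> I" for i
    using convex_onD_Icc'[OF f[unfolded concave_on_def] d[OF that]] \<open>a < b\<close>
    by (simp add: field_simps)
  then have "(\<Sum>i\<in>I. ((b - d i) * f a + (d i - a) * f b) / (b - a)) \<le> (\<Sum>i\<in>I. f (d i))"
    by (rule sum_mono)
  then show ?thesis
    by (simp add: sum_divide_distrib[symmetric] sum.distrib sum_distrib_right[symmetric] sum_subtractf)
qed

section \<open>Cyclic gaps\<close>

lemma add_mod_neq:
  fixes a s t n :: nat
  assumes "s < t" "t < n"
  shows "(a + s) mod n \<noteq> (a + t) mod n"
proof
  assume "(a + s) mod n = (a + t) mod n"
  then have "n dvd t - s"
    using mod_eq_dvd_iff_nat[of "a + s" "a + t" n] assms by simp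
  then show False
    using assms nat_dvd_not_less[of "t - s" n] by simp
qed

lemma inj_on_add_mod:
  fixes a k n :: nat
  assumes "k \<le> n"
  shows "inj_on (\<lambda>t. (a + t) mod n) {..<k}"
  by (rule inj_onI) (metis add_mod_neq assms lessThan_iff linorder_neqE_nat order_less_le_trans)

lemma sum_lessThan_add_mod:
  fixes a k :: nat
  shows "(\<Sum>t<k. g ((a + t) mod k)) = (\<Sum>j<k. g j)"
proof (cases "k = 0")
  case False
  have "(\<lambda>t. (a + t) mod k) ` {..<k} = {..<k}"
    using False by (intro endo_inj_surj inj_on_add_mod) auto
  then show ?thesis
    using sum.reindex[OF inj_on_add_mod[of k k a], of g] by (simp add: comp_def)
qed simp

lemma strict_sorted_nth_gap:
  fixes ys :: "nat list"
  assumes "sorted_wrt (<) ys"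
  shows "i \<le> j \<Longrightarrow> j < length ys \<Longrightarrow> ys ! i + (j - i) \<le> ys ! j"
proof (induction j)
  case (Suc j)
  show ?case
  proof (cases "i = Suc j")
    case False
    then have "ys ! i + (j - i) \<le> ys ! j"
      using Suc by simp
    moreover have "ys ! j < ys ! Suc j"
      using sorted_wrt_nth_less[OF assms] Suc.prems by simp
    ultimately show ?thesis
      using Suc.prems False by simp
  qed simp
qed simp

definition cyclic_gap :: "nat \<Rightarrow> nat list \<Rightarrow> nat \<Rightarrow> nat \<Rightarrow> real" where
  "cyclic_gap n ys m i = real (ys ! ((i + m) mod length ys)) - real (ys ! i)
    + (if i + m < length ys then 0 else real n)"

lemma cyclic_gap_bounds:
  fixes ys :: "nat list"
  assumes sorted: "sorted_wrt (<) ys" and "set ys \<subseteq> {..<n}" and "m < length ys" "i < length ys"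
  shows "real m \<le> cyclic_gap n ys m i \<and> cyclic_gap n ys m i \<le> real n - real (length ys) + real m"
proof -
  define k where "k = length ys"
  have gap: "real (ys ! j) + real (l - j) \<le> real (ys ! l)" if "j \<le> l" "l < k" for j l
    using strict_sorted_nth_gap[OF sorted that(1)] that(2) by (simp add: k_def flip: of_nat_add)
  have lower: "real j \<le> real (ys ! j)" if "j < k" for j
    using gap[of 0 j] that by simp
  have upper: "real (ys ! j) + real k \<le> real n + real j" if "j < k" for j
  proof -
    have "k - 1 < length ys"
      using that by (simp add: k_def)
    then have "ys ! (k - 1) + 1 \<le> n"
      using assms(2) nth_mem by fastforce
    then have "real (ys ! (k - 1)) + 1 \<le> real n"
      by (metis of_nat_1 of_nat_add of_nat_le_iff)
    moreover have "real (ys ! j) + real (k - 1 - j) \<le> real (ys ! (k - 1))"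
      using gap[of j "k - 1"] that by simp
    ultimately show ?thesis
      using that by simp
  qed
  show ?thesis
  proof (cases "i + m < k")
    case True
    then show ?thesis
      using gap[of i "i + m"] lower[of i] upper[of "i + m"] assms by (simp add: cyclic_gap_def k_def)
  next
    case False
    then have "(i + m) mod k = i + m - k" "i + m - k < i"
      using assms by (simp_all add: k_def le_mod_geq)
    then show ?thesis
      using False gap[of "i + m - k" i] lower[of "i + m - k"] upper[of i] assms
      by (simp add: cyclic_gap_def k_def)
  qed
qed

lemma sum_cyclic_gap:
  assumes "m \<le> length ys"
  shows "(\<Sum>i<length ys. cyclic_gap n ys m i) = real m * real n"
proof -
  have "(\<Sum>i<length ys. real (ys ! ((i + m) mod length ys))) = (\<Sum>i<length ys. real (ys ! i))"
    using sum_lessThan_add_mod[of "\<lambda>j. real (ys ! j)" m "length ys"] by (simp add: add.commute)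
  moreover have "(\<Sum>i<length ys. if i + m < length ys then 0 else real n) = (\<Sum>i\<in>{length ys - m..<length ys}. real n)"
    by (intro sum.mono_neutral_cong_right) auto
  ultimately show ?thesis
    using assms by (simp add: cyclic_gap_def sum.distrib sum_subtractf)
qed

lemma log_sin_sq_cyclic_gap:
  assumes "n > 0"
  shows "log_sin_sq n (cyclic_gap n ys m i) = log_sin_sq n (real (ys ! ((i + m) mod length ys)) - real (ys ! i))"
  using log_sin_sq_add_multiple[OF assms, of _ 1] by (simp add: cyclic_gap_def)

text \<open>For each \<open>m\<close>, the \<open>k\<close> cyclic gaps lie in \<open>[m, n - k + m]\<close> and sum to \<open>m n\<close>, so concavity
  bounds their contribution below by the extreme configuration: \<open>k - m\<close> gaps equal to \<open>m\<close> and
  \<open>m\<close> gaps equal to \<open>n - k + m\<close>.\<close>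
lemma sum_log_sin_sq_cyclic_gap_ge:
  fixes ys :: "nat list"
  defines "k \<equiv> length ys"
  assumes sorted: "sorted_wrt (<) ys" and range: "set ys \<subseteq> {..<n}"
    and m: "0 < m" "m < k" and k: "k < n"
  shows "real (k - m) * log_sin_sq n (real m) + real m * log_sin_sq n (real (k - m))
    \<le> (\<Sum>i<k. log_sin_sq n (cyclic_gap n ys m i))"
proof -
  define a b where "a = real m" and "b = real n - real k + real m"
  have "b - a > 0"
    using k by (simp add: a_def b_def)
  have gap_sum: "sum (cyclic_gap n ys m) {..<k} = real m * real n"
    using m by (simp add: k_def sum_cyclic_gap)
  have "real (k - m) = real k - real m"
    using m by simp
  have "{a..b} \<subseteq> {0<..<real n}"
    using m k by (auto simp: a_def b_def)
  moreover have "concave_on {0<..<real n} (log_sin_sq n)"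
    using k by (intro concave_on_log_sin_sq) simp
  ultimately have "concave_on {a..b} (log_sin_sq n)"
    unfolding concave_on_def by (blast intro: convex_on_subset)
  then have chord: "((real (card {..<k}) * b - sum (cyclic_gap n ys m) {..<k}) * log_sin_sq n a
        + (sum (cyclic_gap n ys m) {..<k} - real (card {..<k}) * a) * log_sin_sq n b) / (b - a)
      \<le> (\<Sum>i<k. log_sin_sq n (cyclic_gap n ys m i))"
    using \<open>b - a > 0\<close> cyclic_gap_bounds[OF sorted range] m
    by (intro concave_on_sum_ge_chord) (auto simp: a_def b_def k_def)
  have coeffs: "real (card {..<k}) * b - sum (cyclic_gap n ys m) {..<k} = real (k - m) * (b - a)"
    "sum (cyclic_gap n ys m) {..<k} - real (card {..<k}) * a = real m * (b - a)"
    unfolding gap_sum \<open>real (k - m) = real k - real m\<close> a_def b_def card_lessThan by (simp_all add: algebra_simps)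
  have cancel: "(real (k - m) * (b - a) * log_sin_sq n a + real m * (b - a) * log_sin_sq n b) / (b - a)
      = real (k - m) * log_sin_sq n a + real m * log_sin_sq n b"
    using \<open>b - a > 0\<close> by (simp add: add_divide_distrib)
  have "b = real n - real (k - m)"
    using m by (simp add: b_def)
  then have "log_sin_sq n b = log_sin_sq n (real (k - m))"
    using k by (simp add: log_sin_sq_reflect)
  with chord[unfolded coeffs cancel] show ?thesis
    by (simp add: a_def)
qed

section \<open>The minimal energy\<close>

definition log_sin_energy :: "nat \<Rightarrow> nat set \<Rightarrow> real" where
  "log_sin_energy n S = (\<Sum>a\<in>S. \<Sum>b\<in>S - {a}. log_sin_sq n (real b - real a))"

lemma sum_off_diagonal_set_nth:
  assumes "distinct xs"
  shows "(\<Sum>a\<in>set xs. \<Sum>b\<in>set xs - {a}. g a b)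
    = (\<Sum>i<length xs. \<Sum>j\<in>{..<length xs} - {i}. g (xs ! i) (xs ! j))"
proof -
  have inj: "inj_on (nth xs) {..<length xs}"
    using assms by (simp add: inj_on_def nth_eq_iff_index_eq)
  have image: "nth xs ` ({..<length xs} - I) = set xs - nth xs ` I" if "I \<subseteq> {..<length xs}" for I
    using inj that by (auto simp: set_conv_nth inj_on_def)
  have "(\<Sum>a\<in>set xs. \<Sum>b\<in>set xs - {a}. g a b) = (\<Sum>i<length xs. \<Sum>b\<in>set xs - {xs ! i}. g (xs ! i) b)"
    using sum.reindex[OF inj, of "\<lambda>a. \<Sum>b\<in>set xs - {a}. g a b"] image[of "{}"] by simp
  also have "\<dots> = (\<Sum>i<length xs. \<Sum>j\<in>{..<length xs} - {i}. g (xs ! i) (xs ! j))"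
  proof (intro sum.cong refl)
    fix i
    assume "i \<in> {..<length xs}"
    then show "(\<Sum>b\<in>set xs - {xs ! i}. g (xs ! i) b) = (\<Sum>j\<in>{..<length xs} - {i}. g (xs ! i) (xs ! j))"
      using sum.reindex[OF inj_on_diff[OF inj, of "{i}"], of "g (xs ! i)"] image[of "{i}"] by simp
  qed
  finally show ?thesis .
qed

lemma sum_off_diagonal_lessThan:
  fixes h :: "nat \<Rightarrow> nat \<Rightarrow> 'a :: comm_monoid_add"
  shows "(\<Sum>i<K. \<Sum>j\<in>{..<K} - {i}. h i j) = (\<Sum>j<K. \<Sum>i<j. h i j + h j i)"
proof (induction K)
  case (Suc K)
  have "(\<Sum>j\<in>{..<Suc K} - {i}. h i j) = (\<Sum>j\<in>{..<K} - {i}. h i j) + h i K" if "i < K" for i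
  proof -
    have "{..<Suc K} - {i} = insert K ({..<K} - {i})"
      using that by auto
    then show ?thesis
      by (simp add: add.commute)
  qed
  moreover have "{..<Suc K} - {K} = {..<K}"
    by auto
  ultimately show ?case
    using Suc.IH by (simp add: sum.distrib add_ac)
qed simp

lemma log_sin_energy_set:
  assumes "distinct xs"
  shows "log_sin_energy n (set xs) = 2 * (\<Sum>j<length xs. \<Sum>i<j. log_sin_sq n (real (xs ! j) - real (xs ! i)))"
proof -
  have "log_sin_energy n (set xs)
      = (\<Sum>j<length xs. \<Sum>i<j. log_sin_sq n (real (xs ! j) - real (xs ! i)) + log_sin_sq n (real (xs ! i) - real (xs ! j)))"
    unfolding log_sin_energy_def sum_off_diagonal_set_nth[OF assms] by (rule sum_off_diagonal_lessThan)
  also have "\<dots> = (\<Sum>j<length xs. \<Sum>i<j. 2 * log_sin_sq n (real (xs ! j) - real (xs ! i)))"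
    using log_sin_sq_minus[of n "real (xs ! j) - real (xs ! i)" for i j] by simp
  finally show ?thesis
    by (simp add: sum_distrib_left)
qed


lemma sum_remove_eq_sum_add_mod:
  fixes i k :: nat and g :: "nat \<Rightarrow> 'a :: cancel_comm_monoid_add"
  assumes "i < k"
  shows "(\<Sum>j\<in>{..<k} - {i}. g j) = (\<Sum>m\<in>{1..<k}. g ((i + m) mod k))"
proof -
  have "g i + (\<Sum>j\<in>{..<k} - {i}. g j) = (\<Sum>j<k. g j)"
    using assms by (simp add: sum.remove)
  also have "\<dots> = (\<Sum>m<k. g ((i + m) mod k))"
    by (rule sum_lessThan_add_mod[symmetric])
  also have "\<dots> = g i + (\<Sum>m\<in>{1..<k}. g ((i + m) mod k))"
  proof -
    have "{..<k} - {0} = {1..<k}"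
      by auto
    then show ?thesis
      using assms sum.remove[of "{..<k}" 0 "\<lambda>m. g ((i + m) mod k)"] by simp
  qed
  finally show ?thesis
    by simp
qed

lemma sum_pairs_diff:
  fixes g :: "real \<Rightarrow> real"
  shows "(\<Sum>j<K. \<Sum>i<j. g (real j - real i)) = (\<Sum>r\<in>{1..<K}. real (K - r) * g (real r))"
proof (induction K)
  case (Suc K)
  have "(\<Sum>i<K. g (real K - real i)) = (\<Sum>r\<in>{1..<Suc K}. g (real r))"
    by (rule sum.reindex_bij_witness[where i = "\<lambda>r. K - r" and j = "\<lambda>i. K - i"]) auto
  moreover have "(\<Sum>r\<in>{1..<Suc K}. real (Suc K - r) * g (real r))
      = (\<Sum>r\<in>{1..<Suc K}. real (K - r) * g (real r)) + (\<Sum>r\<in>{1..<Suc K}. g (real r))"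
    unfolding sum.distrib[symmetric] by (rule sum.cong) (auto simp: Suc_diff_le algebra_simps)
  moreover have "(\<Sum>r\<in>{1..<Suc K}. real (K - r) * g (real r)) = (\<Sum>r\<in>{1..<K}. real (K - r) * g (real r))"
    by (rule sum.mono_neutral_right) auto
  ultimately show ?case
    using Suc.IH by simp
qed simp

lemma log_sin_energy_ge:
  assumes S: "S \<subseteq> {..<n}" and k: "card S < n"
  shows "2 * (\<Sum>r\<in>{1..<card S}. real (card S - r) * log_sin_sq n (real r)) \<le> log_sin_energy n S"
proof -
  define k where "k = card S"
  obtain ys where sorted: "sorted_wrt (<) ys" and set: "set ys = S" and len: "length ys = k"
    using finite_set_strict_sorted[OF finite_subset[OF S finite_lessThan]] by (metis k_def)
  have "n > 0"
    using k by simp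
  have "log_sin_energy n S = (\<Sum>i<k. \<Sum>j\<in>{..<k} - {i}. log_sin_sq n (real (ys ! j) - real (ys ! i)))"
    unfolding log_sin_energy_def set[symmetric] len[symmetric]
    by (rule sum_off_diagonal_set_nth) (use sorted in \<open>simp add: strict_sorted_iff\<close>)
  also have "\<dots> = (\<Sum>i<k. \<Sum>m\<in>{1..<k}. log_sin_sq n (cyclic_gap n ys m i))"
  proof (rule sum.cong[OF refl])
    fix i
    assume "i \<in> {..<k}"
    then show "(\<Sum>j\<in>{..<k} - {i}. log_sin_sq n (real (ys ! j) - real (ys ! i)))
        = (\<Sum>m\<in>{1..<k}. log_sin_sq n (cyclic_gap n ys m i))"
      by (simp add: sum_remove_eq_sum_add_mod log_sin_sq_cyclic_gap[OF \<open>n > 0\<close>] len)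
  qed
  also have "\<dots> = (\<Sum>m\<in>{1..<k}. \<Sum>i<k. log_sin_sq n (cyclic_gap n ys m i))"
    by (rule sum.swap)
  finally have energy: "log_sin_energy n S = \<dots>" .
  have "(\<Sum>m\<in>{1..<k}. real (k - m) * log_sin_sq n (real m) + real m * log_sin_sq n (real (k - m)))
      \<le> log_sin_energy n S"
    unfolding energy using sum_log_sin_sq_cyclic_gap_ge[OF sorted, of n] S k
    by (intro sum_mono) (auto simp: set len k_def)
  moreover have "(\<Sum>m\<in>{1..<k}. real m * log_sin_sq n (real (k - m)))
      = (\<Sum>r\<in>{1..<k}. real (k - r) * log_sin_sq n (real r))"
    by (rule sum.reindex_bij_witness[where i = "\<lambda>r. k - r" and j = "\<lambda>m. k - m"]) auto
  ultimately show ?thesis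
    by (simp add: sum.distrib k_def)
qed

lemma log_sin_energy_circ_succ:
  assumes "k \<le> n" "0 < n"
  shows "log_sin_energy n (circ_succ n k i) = 2 * (\<Sum>r\<in>{1..<k}. real (k - r) * log_sin_sq n (real r))"
proof -
  define cs where "cs = map (\<lambda>t. (i + t) mod n) [0..<k]"
  have "distinct cs" "set cs = circ_succ n k i" "length cs = k"
    using inj_on_add_mod[OF assms(1), of i]
    by (auto simp: cs_def circ_succ_def distinct_map atLeast0LessThan)
  have shift: "log_sin_sq n (real (cs ! b) - real (cs ! a)) = log_sin_sq n (real b - real a)"
    if "a < k" "b < k" for a b
  proof -
    have "real ((i + t) mod n) = real (i + t) - real n * real ((i + t) div n)" for t
      using div_mult_mod_eq[of "i + t" n] by (metis add_diff_cancel_left' of_nat_add of_nat_mult mult.commute)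
    then have "real (cs ! b) - real (cs ! a)
        = (real b - real a) + real n * of_int (int ((i + a) div n) - int ((i + b) div n))"
      using that by (simp add: cs_def algebra_simps)
    then show ?thesis
      using log_sin_sq_add_multiple[OF assms(2), of "real b - real a" "int ((i + a) div n) - int ((i + b) div n)"]
      by simp
  qed
  have "log_sin_energy n (circ_succ n k i) = 2 * (\<Sum>j<k. \<Sum>i<j. log_sin_sq n (real (cs ! j) - real (cs ! i)))"
    using log_sin_energy_set[OF \<open>distinct cs\<close>] \<open>set cs = circ_succ n k i\<close> \<open>length cs = k\<close> by simp
  also have "\<dots> = 2 * (\<Sum>j<k. \<Sum>i<j. log_sin_sq n (real j - real i))"
    using shift by simp
  finally show ?thesis
    by (simp add: sum_pairs_diff)
qed

lemma sin_sq_prod_pos_ln: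
  assumes "n > 0" "distinct xs" "set xs \<subseteq> {..<n}"
  shows "sin_sq_prod n xs > 0 \<and> 2 * ln (sin_sq_prod n xs) = log_sin_energy n (set xs)"
proof -
  define f where "f j i = (sin (pi * (real (xs ! j) - real (xs ! i)) / real n))\<^sup>2" for j i
  have pos: "f j i > 0" if "i < j" "j < length xs" for i j
  proof -
    have "xs ! i \<noteq> xs ! j"
      using assms(2) that by (simp add: nth_eq_iff_index_eq)
    moreover have "xs ! i \<in> set xs" "xs ! j \<in> set xs"
      using that by auto
    then have "xs ! i < n" "xs ! j < n"
      using assms(3) by (meson lessThan_iff subsetD)+
    ultimately have "sin (pi * (real (xs ! j) - real (xs ! i)) / real n) \<noteq> 0"
      using assms(1) by (intro sin_pi_divide_nonzero) auto
    then show ?thesis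
      by (simp add: f_def)
  qed
  then have inner_pos: "(\<Prod>i<j. f j i) > 0" if "j < length xs" for j
    using that by (intro prod_pos) auto
  then have "sin_sq_prod n xs > 0"
    unfolding sin_sq_prod_def f_def[symmetric] by (rule prod_pos) (use inner_pos in auto)
  moreover have "ln (sin_sq_prod n xs) = (\<Sum>j<length xs. ln (\<Prod>i<j. f j i))"
    unfolding sin_sq_prod_def f_def[symmetric]
    by (rule ln_prod) (use inner_pos in \<open>auto simp: less_imp_neq[symmetric]\<close>)
  moreover have "\<dots> = (\<Sum>j<length xs. \<Sum>i<j. ln (f j i))"
    by (intro sum.cong refl ln_prod) (use pos in \<open>auto simp: less_imp_neq[symmetric]\<close>)
  ultimately show ?thesis
    using log_sin_energy_set[OF assms(2), of n] by (simp add: f_def log_sin_sq_def)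
qed

lemma ln_prod_sin_sq_powers:
  assumes "k < n"
  defines "Q \<equiv> \<Prod>r = 1..k - 1. ((sin (pi * real r / real n))\<^sup>2) ^ (k - r)"
  shows "Q > 0 \<and> ln Q = (\<Sum>r\<in>{1..<k}. real (k - r) * log_sin_sq n (real r))"
proof -
  have range: "{1..k - 1} = {1..<k}"
    by auto
  have pos: "(sin (pi * real r / real n))\<^sup>2 > 0" if "r \<in> {1..<k}" for r
    using that assms sin_pi_divide_nonzero[of n "real r"] by simp
  then have "Q > 0"
    unfolding Q_def range by (intro prod_pos) auto
  moreover have "ln Q = (\<Sum>r\<in>{1..<k}. ln (((sin (pi * real r / real n))\<^sup>2) ^ (k - r)))"
    unfolding Q_def range using pos by (intro ln_prod) auto
  moreover have "\<dots> = (\<Sum>r\<in>{1..<k}. real (k - r) * log_sin_sq n (real r))"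
    using pos by (intro sum.cong) (simp_all add: ln_realpow log_sin_sq_def)
  ultimately show ?thesis
    by simp
qed

lemma sin_sq_prod_ge:
  assumes "k < n" "distinct xs" "length xs = k" "set xs \<subseteq> {..<n}"
  shows "(\<Prod>r = 1..k - 1. ((sin (pi * real r / real n))\<^sup>2) ^ (k - r)) \<le> sin_sq_prod n xs"
proof -
  define Q where "Q = (\<Prod>r = 1..k - 1. ((sin (pi * real r / real n))\<^sup>2) ^ (k - r))"
  have "Q > 0" and ln_Q: "ln Q = (\<Sum>r\<in>{1..<k}. real (k - r) * log_sin_sq n (real r))"
    using ln_prod_sin_sq_powers[OF assms(1)] by (simp_all add: Q_def)
  have "sin_sq_prod n xs > 0" and "2 * ln (sin_sq_prod n xs) = log_sin_energy n (set xs)"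
    using sin_sq_prod_pos_ln[of n xs] assms by auto
  moreover have "card (set xs) = k"
    using assms by (simp add: distinct_card)
  ultimately have "ln Q \<le> ln (sin_sq_prod n xs)"
    using log_sin_energy_ge[of "set xs" n] assms ln_Q by simp
  then show ?thesis
    using \<open>Q > 0\<close> \<open>sin_sq_prod n xs > 0\<close> by (simp add: Q_def)
qed

lemma sin_sq_prod_circ_succ:
  assumes "k < n" "distinct xs" "length xs = k" "set xs = circ_succ n k i"
  shows "sin_sq_prod n xs = (\<Prod>r = 1..k - 1. ((sin (pi * real r / real n))\<^sup>2) ^ (k - r))"
proof -
  define Q where "Q = (\<Prod>r = 1..k - 1. ((sin (pi * real r / real n))\<^sup>2) ^ (k - r))"
  have "Q > 0" and ln_Q: "ln Q = (\<Sum>r\<in>{1..<k}. real (k - r) * log_sin_sq n (real r))"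
    using ln_prod_sin_sq_powers[OF assms(1)] by (simp_all add: Q_def)
  have "set xs \<subseteq> {..<n}"
    using assms by (auto simp: circ_succ_def)
  then have "sin_sq_prod n xs > 0" and "2 * ln (sin_sq_prod n xs) = log_sin_energy n (set xs)"
    using sin_sq_prod_pos_ln[of n xs] assms by auto
  then have "ln (sin_sq_prod n xs) = ln Q"
    using log_sin_energy_circ_succ[of k n i] assms ln_Q by simp
  then show ?thesis
    using \<open>Q > 0\<close> \<open>sin_sq_prod n xs > 0\<close> by (simp add: Q_def)
qed

theorem mainTheorem6:
  fixes n k :: nat
  assumes "1 \<le> k" and "k < n" and "\<not> (even n \<and> even k)"
  defines "V \<equiv> (2 ^ (k * (k - 1)) / real k ^ k) *
                 (\<Prod>r = 1..k - 1. (sin (pi * real r / real n) ^ 2) ^ (k - r))"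
  shows "(\<forall>rs. length rs = k \<and> distinct rs \<and> set rs \<subseteq> {..<n} \<longrightarrow>
            (let D = det (row_submat (G_mat n k) rs * mat_H (row_submat (G_mat n k) rs))
             in D \<in> \<real> \<and> V \<le> Re D))
       \<and> (\<forall>rs i. i < n \<and> length rs = k \<and> distinct rs \<and> set rs = circ_succ n k i \<longrightarrow>
            det (row_submat (G_mat n k) rs * mat_H (row_submat (G_mat n k) rs))
              = complex_of_real V)"
proof (intro conjI allI impI)
  fix rs
  assume rs: "length rs = k \<and> distinct rs \<and> set rs \<subseteq> {..<n}"
  then have "V \<le> 2 ^ (k * (k - 1)) / real k ^ k * sin_sq_prod n rs"
    using sin_sq_prod_ge[OF assms(2)] unfolding V_def by (intro mult_left_mono) auto
  then show "let D = det (row_submat (G_mat n k) rs * mat_H (row_submat (G_mat n k) rs)) in D \<in> \<real> \<and> V \<le> Re D"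
    using det_row_submat_G_mult_mat_H[OF assms(1,2)] rs by simp
next
  fix rs i
  assume rs: "i < n \<and> length rs = k \<and> distinct rs \<and> set rs = circ_succ n k i"
  then have "set rs \<subseteq> {..<n}"
    using assms(2) by (auto simp: circ_succ_def)
  then show "det (row_submat (G_mat n k) rs * mat_H (row_submat (G_mat n k) rs)) = complex_of_real V"
    using det_row_submat_G_mult_mat_H[OF assms(1,2)] sin_sq_prod_circ_succ[OF assms(2)] rs by (simp add: V_def)
qed

end
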